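(* If $F$ is a non-abelian free metabelian Lie algebra over a field $k$, then $\mathrm{Fit}(F)=F^2$.
   Context: A Lie algebra is metabelian if $(a\circ b)\circ(c\circ d)=0$ identically; free metabelian means free in the variety of metabelian Lie $k$-algebras. $F^2$ is the ideal spanned by all products $a\circ b$; $\mathrm{Fit}(F)$ (Fitting radical) is the ideal generated by all elements lying in nilpotent ideals of $F$. *)

theory Defs
  imports Main
begin

record ('k, 'a) liealg =
  lcarrier :: "'a set"
  lzero :: 'a
  ladd :: "'a \<Rightarrow> 'a \<Rightarrow> 'a"
  lneg :: "'a \<Rightarrow> 'a"
  lsmult :: "'k \<Rightarrow> 'a \<Rightarrow> 'a"
  lbr :: "'a \<Rightarrow> 'a \<Rightarrow> 'a"

definition lie_algebra :: "('k::field, 'a) liealg \<Rightarrow> bool" where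
  "lie_algebra L \<longleftrightarrow>
     lzero L \<in> lcarrier L \<and>
     (\<forall>x\<in>lcarrier L. \<forall>y\<in>lcarrier L. ladd L x y \<in> lcarrier L) \<and>
     (\<forall>x\<in>lcarrier L. lneg L x \<in> lcarrier L) \<and>
     (\<forall>c. \<forall>x\<in>lcarrier L. lsmult L c x \<in> lcarrier L) \<and>
     (\<forall>x\<in>lcarrier L. \<forall>y\<in>lcarrier L. lbr L x y \<in> lcarrier L) \<and>
     (\<forall>x\<in>lcarrier L. \<forall>y\<in>lcarrier L. \<forall>z\<in>lcarrier L.
        ladd L (ladd L x y) z = ladd L x (ladd L y z)) \<and>
     (\<forall>x\<in>lcarrier L. \<forall>y\<in>lcarrier L. ladd L x y = ladd L y x) \<and>
     (\<forall>x\<in>lcarrier L. ladd L (lzero L) x = x) \<and>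
     (\<forall>x\<in>lcarrier L. ladd L (lneg L x) x = lzero L) \<and>
     (\<forall>a b. \<forall>x\<in>lcarrier L. lsmult L a (lsmult L b x) = lsmult L (a * b) x) \<and>
     (\<forall>x\<in>lcarrier L. lsmult L 1 x = x) \<and>
     (\<forall>a. \<forall>x\<in>lcarrier L. \<forall>y\<in>lcarrier L.
        lsmult L a (ladd L x y) = ladd L (lsmult L a x) (lsmult L a y)) \<and>
     (\<forall>a b. \<forall>x\<in>lcarrier L. lsmult L (a + b) x = ladd L (lsmult L a x) (lsmult L b x)) \<and>
     (\<forall>x\<in>lcarrier L. \<forall>y\<in>lcarrier L. \<forall>z\<in>lcarrier L.
        lbr L (ladd L x y) z = ladd L (lbr L x z) (lbr L y z)) \<and>
     (\<forall>x\<in>lcarrier L. \<forall>y\<in>lcarrier L. \<forall>z\<in>lcarrier L.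
        lbr L x (ladd L y z) = ladd L (lbr L x y) (lbr L x z)) \<and>
     (\<forall>a. \<forall>x\<in>lcarrier L. \<forall>y\<in>lcarrier L.
        lbr L (lsmult L a x) y = lsmult L a (lbr L x y) \<and>
        lbr L x (lsmult L a y) = lsmult L a (lbr L x y)) \<and>
     (\<forall>x\<in>lcarrier L. lbr L x x = lzero L) \<and>
     (\<forall>x\<in>lcarrier L. \<forall>y\<in>lcarrier L. \<forall>z\<in>lcarrier L.
        ladd L (ladd L (lbr L x (lbr L y z)) (lbr L y (lbr L z x))) (lbr L z (lbr L x y))
          = lzero L)"

definition metabelian :: "('k, 'a) liealg \<Rightarrow> bool" where
  "metabelian L \<longleftrightarrow>
     (\<forall>a\<in>lcarrier L. \<forall>b\<in>lcarrier L. \<forall>c\<in>lcarrier L. \<forall>d\<in>lcarrier L.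
        lbr L (lbr L a b) (lbr L c d) = lzero L)"

definition abelian :: "('k, 'a) liealg \<Rightarrow> bool" where
  "abelian L \<longleftrightarrow> (\<forall>a\<in>lcarrier L. \<forall>b\<in>lcarrier L. lbr L a b = lzero L)"

definition lie_hom :: "('k, 'a) liealg \<Rightarrow> ('k, 'b) liealg \<Rightarrow> ('a \<Rightarrow> 'b) \<Rightarrow> bool" where
  "lie_hom L M f \<longleftrightarrow>
     (\<forall>x\<in>lcarrier L. f x \<in> lcarrier M) \<and>
     (\<forall>x\<in>lcarrier L. \<forall>y\<in>lcarrier L. f (ladd L x y) = ladd M (f x) (f y)) \<and>
     (\<forall>c. \<forall>x\<in>lcarrier L. f (lsmult L c x) = lsmult M c (f x)) \<and>
     (\<forall>x\<in>lcarrier L. \<forall>y\<in>lcarrier L. f (lbr L x y) = lbr M (f x) (f y))"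

text \<open>Free metabelian Lie algebra on generators X via iota. The universal property is
  required for all metabelian Lie algebras whose carrier lies in the type 'a of F.\<close>
definition free_metabelian :: "('k::field, 'a) liealg \<Rightarrow> 'x set \<Rightarrow> ('x \<Rightarrow> 'a) \<Rightarrow> bool" where
  "free_metabelian F X iota \<longleftrightarrow>
     lie_algebra F \<and> metabelian F \<and> iota ` X \<subseteq> lcarrier F \<and>
     (\<forall>M :: ('k, 'a) liealg. lie_algebra M \<and> metabelian M \<longrightarrow>
        (\<forall>g. (\<forall>x\<in>X. g x \<in> lcarrier M) \<longrightarrow>
           (\<exists>f. lie_hom F M f \<and> (\<forall>x\<in>X. f (iota x) = g x)) \<and>
           (\<forall>f1 f2. lie_hom F M f1 \<and> lie_hom F M f2 \<and>
               (\<forall>x\<in>X. f1 (iota x) = g x) \<and> (\<forall>x\<in>X. f2 (iota x) = g x)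
             \<longrightarrow> (\<forall>y\<in>lcarrier F. f1 y = f2 y))))"

definition lsubspace :: "('k, 'a) liealg \<Rightarrow> 'a set \<Rightarrow> bool" where
  "lsubspace L V \<longleftrightarrow> V \<subseteq> lcarrier L \<and> lzero L \<in> V \<and>
     (\<forall>x\<in>V. \<forall>y\<in>V. ladd L x y \<in> V) \<and> (\<forall>c. \<forall>x\<in>V. lsmult L c x \<in> V)"

definition lspan :: "('k, 'a) liealg \<Rightarrow> 'a set \<Rightarrow> 'a set" where
  "lspan L S = \<Inter>{V. lsubspace L V \<and> S \<subseteq> V}"

definition lideal :: "('k, 'a) liealg \<Rightarrow> 'a set \<Rightarrow> bool" where
  "lideal L I \<longleftrightarrow> lsubspace L I \<and> (\<forall>x\<in>lcarrier L. \<forall>i\<in>I. lbr L x i \<in> I)"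

definition ideal_gen :: "('k, 'a) liealg \<Rightarrow> 'a set \<Rightarrow> 'a set" where
  "ideal_gen L S = \<Inter>{I. lideal L I \<and> S \<subseteq> I}"

text \<open>Lower central series of a subspace I (viewed as a Lie algebra):
  I^1 = I, I^(n+1) = span [I, I^n]; here indexed from 0.\<close>
fun lcs :: "('k, 'a) liealg \<Rightarrow> 'a set \<Rightarrow> nat \<Rightarrow> 'a set" where
  "lcs L I 0 = I"
| "lcs L I (Suc n) = lspan L {lbr L a b | a b. a \<in> I \<and> b \<in> lcs L I n}"

definition nilpotent_set :: "('k, 'a) liealg \<Rightarrow> 'a set \<Rightarrow> bool" where
  "nilpotent_set L I \<longleftrightarrow> (\<exists>n. lcs L I n \<subseteq> {lzero L})"

definition fitting :: "('k, 'a) liealg \<Rightarrow> 'a set" where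
  "fitting L = ideal_gen L (\<Union>{I. lideal L I \<and> nilpotent_set L I})"

definition derived :: "('k, 'a) liealg \<Rightarrow> 'a set" where
  "derived L = lspan L {lbr L a b | a b. a \<in> lcarrier L \<and> b \<in> lcarrier L}"

end

theory Submission
  imports Defs
begin

text \<open>The derived algebra \<open>F\<^sup>2\<close> of a metabelian algebra is an abelian ideal, hence lies in
  \<open>Fit(F)\<close>; the point is that every nilpotent ideal \<open>I\<close> lies in \<open>F\<^sup>2\<close>. Map \<open>F\<close> into the
  two-dimensional non-abelian algebra \<open>k\<^sup>2\<close>, \<open>[p, q] = (0, p\<^sub>1q\<^sub>2 - q\<^sub>1p\<^sub>2)\<close>, by sending a
  generator \<open>j\<close> to \<open>(1, 0)\<close> and all other generators to \<open>(0, 1)\<close>. The first coordinate of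
  this map is the \<open>j\<close>-th coordinate of an element modulo \<open>F\<^sup>2\<close>, so for \<open>a \<in> I - F\<^sup>2\<close> it is
  some \<open>\<alpha> \<noteq> 0\<close> for a suitable \<open>j\<close>. With a second generator \<open>y\<close> (there is one because \<open>F\<close> is
  not abelian) the elements \<open>ad(a)\<^sup>n[y, a]\<close> lie in the lower central series of \<open>I\<close>, yet they
  map to \<open>(0, -\<alpha>\<^sup>n\<^sup>+\<^sup>1) \<noteq> 0\<close>.\<close>

section \<open>Lie algebras with a carrier\<close>

locale lie_alg =
  fixes L :: "('k::field, 'a) liealg"
  assumes lie_algebra: "lie_algebra L"
begin

abbreviation carr where "carr \<equiv> lcarrier L"
abbreviation zero_L ("\<zero>") where "\<zero> \<equiv> lzero L"
abbreviation add_L (infixl "\<oplus>" 65) where "x \<oplus> y \<equiv> ladd L x y"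
abbreviation neg_L ("\<ominus> _" [81] 80) where "\<ominus> x \<equiv> lneg L x"
abbreviation smult_L (infixr "\<cdot>" 75) where "c \<cdot> x \<equiv> lsmult L c x"
abbreviation br_L ("\<lbrace>_, _\<rbrace>") where "\<lbrace>x, y\<rbrace> \<equiv> lbr L x y"

lemma carr_zero [simp]: "\<zero> \<in> carr"
  using lie_algebra unfolding lie_algebra_def by metis
lemma carr_add [simp]: "x \<in> carr \<Longrightarrow> y \<in> carr \<Longrightarrow> x \<oplus> y \<in> carr"
  using lie_algebra unfolding lie_algebra_def by metis
lemma carr_neg [simp]: "x \<in> carr \<Longrightarrow> \<ominus> x \<in> carr"
  using lie_algebra unfolding lie_algebra_def by metis
lemma carr_smult [simp]: "x \<in> carr \<Longrightarrow> c \<cdot> x \<in> carr"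
  using lie_algebra unfolding lie_algebra_def by metis
lemma carr_br [simp]: "x \<in> carr \<Longrightarrow> y \<in> carr \<Longrightarrow> \<lbrace>x, y\<rbrace> \<in> carr"
  using lie_algebra unfolding lie_algebra_def by metis
lemma add_assoc: "x \<in> carr \<Longrightarrow> y \<in> carr \<Longrightarrow> z \<in> carr \<Longrightarrow> x \<oplus> y \<oplus> z = x \<oplus> (y \<oplus> z)"
  using lie_algebra unfolding lie_algebra_def by metis
lemma add_commute: "x \<in> carr \<Longrightarrow> y \<in> carr \<Longrightarrow> x \<oplus> y = y \<oplus> x"
  using lie_algebra unfolding lie_algebra_def by metis
lemma add_zero_left [simp]: "x \<in> carr \<Longrightarrow> \<zero> \<oplus> x = x"
  using lie_algebra unfolding lie_algebra_def by metis
lemma add_neg_left [simp]: "x \<in> carr \<Longrightarrow> \<ominus> x \<oplus> x = \<zero>"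
  using lie_algebra unfolding lie_algebra_def by metis
lemma smult_smult: "x \<in> carr \<Longrightarrow> a \<cdot> b \<cdot> x = (a * b) \<cdot> x"
  using lie_algebra unfolding lie_algebra_def by metis
lemma smult_one [simp]: "x \<in> carr \<Longrightarrow> 1 \<cdot> x = x"
  using lie_algebra unfolding lie_algebra_def by metis
lemma smult_add_right: "x \<in> carr \<Longrightarrow> y \<in> carr \<Longrightarrow> a \<cdot> (x \<oplus> y) = a \<cdot> x \<oplus> a \<cdot> y"
  using lie_algebra unfolding lie_algebra_def by metis
lemma smult_add_left: "x \<in> carr \<Longrightarrow> (a + b) \<cdot> x = a \<cdot> x \<oplus> b \<cdot> x"
  using lie_algebra unfolding lie_algebra_def by metis
lemma br_add_left: "x \<in> carr \<Longrightarrow> y \<in> carr \<Longrightarrow> z \<in> carr \<Longrightarrow> \<lbrace>x \<oplus> y, z\<rbrace> = \<lbrace>x, z\<rbrace> \<oplus> \<lbrace>y, z\<rbrace>"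
  using lie_algebra unfolding lie_algebra_def by metis
lemma br_add_right: "x \<in> carr \<Longrightarrow> y \<in> carr \<Longrightarrow> z \<in> carr \<Longrightarrow> \<lbrace>x, y \<oplus> z\<rbrace> = \<lbrace>x, y\<rbrace> \<oplus> \<lbrace>x, z\<rbrace>"
  using lie_algebra unfolding lie_algebra_def by metis
lemma br_smult_left: "x \<in> carr \<Longrightarrow> y \<in> carr \<Longrightarrow> \<lbrace>a \<cdot> x, y\<rbrace> = a \<cdot> \<lbrace>x, y\<rbrace>"
  using lie_algebra unfolding lie_algebra_def by metis
lemma br_smult_right: "x \<in> carr \<Longrightarrow> y \<in> carr \<Longrightarrow> \<lbrace>x, a \<cdot> y\<rbrace> = a \<cdot> \<lbrace>x, y\<rbrace>"
  using lie_algebra unfolding lie_algebra_def by metis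
lemma br_self [simp]: "x \<in> carr \<Longrightarrow> \<lbrace>x, x\<rbrace> = \<zero>"
  using lie_algebra unfolding lie_algebra_def by metis
lemma jacobi: "x \<in> carr \<Longrightarrow> y \<in> carr \<Longrightarrow> z \<in> carr \<Longrightarrow>
    \<lbrace>x, \<lbrace>y, z\<rbrace>\<rbrace> \<oplus> \<lbrace>y, \<lbrace>z, x\<rbrace>\<rbrace> \<oplus> \<lbrace>z, \<lbrace>x, y\<rbrace>\<rbrace> = \<zero>"
  using lie_algebra unfolding lie_algebra_def by metis

lemma add_zero_right [simp]: "x \<in> carr \<Longrightarrow> x \<oplus> \<zero> = x"
  using add_commute[of x \<zero>] by simp

lemma add_left_commute: "x \<in> carr \<Longrightarrow> y \<in> carr \<Longrightarrow> z \<in> carr \<Longrightarrow> x \<oplus> (y \<oplus> z) = y \<oplus> (x \<oplus> z)"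
  by (metis add_assoc add_commute)

lemma add_left_cancel:
  assumes "x \<in> carr" "y \<in> carr" "z \<in> carr" "x \<oplus> y = x \<oplus> z"
  shows "y = z"
proof -
  have "y = \<ominus> x \<oplus> x \<oplus> y" using assms by simp
  also have "\<dots> = \<ominus> x \<oplus> x \<oplus> z" using assms by (metis add_assoc carr_neg)
  also have "\<dots> = z" using assms by simp
  finally show ?thesis .
qed

lemma smult_zero_left [simp]: "x \<in> carr \<Longrightarrow> 0 \<cdot> x = \<zero>"
  using smult_add_left[of x 0 0] add_left_cancel[of "0 \<cdot> x" "0 \<cdot> x" \<zero>] by simp

lemma smult_zero_right [simp]: "c \<cdot> \<zero> = \<zero>"
  using smult_add_right[of \<zero> \<zero> c] add_left_cancel[of "c \<cdot> \<zero>" "c \<cdot> \<zero>" \<zero>] by simp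

lemma neg_eq_smult: assumes "x \<in> carr" shows "\<ominus> x = (-1) \<cdot> x"
proof (rule add_left_cancel)
  show "x \<oplus> \<ominus> x = x \<oplus> (-1) \<cdot> x"
    using assms smult_add_left[of x 1 "-1"] add_commute[of x "\<ominus> x"] by simp
qed (use assms in simp_all)

lemma br_zero_left [simp]: "x \<in> carr \<Longrightarrow> \<lbrace>\<zero>, x\<rbrace> = \<zero>"
  using br_smult_left[of \<zero> x 0] by simp

lemma br_zero_right [simp]: "x \<in> carr \<Longrightarrow> \<lbrace>x, \<zero>\<rbrace> = \<zero>"
  using br_smult_right[of x \<zero> 0] by simp

lemma smult_right_cancel:
  assumes "v \<in> carr" "v \<noteq> \<zero>" "c \<cdot> v = d \<cdot> v"
  shows "c = d"
proof (rule ccontr)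
  assume "c \<noteq> d"
  have "(c - d) \<cdot> v = \<zero>"
    using assms smult_add_left[of v c "-d"] smult_add_left[of v d "-d"] by simp
  then have "(inverse (c - d) * (c - d)) \<cdot> v = \<zero>"
    using assms by (simp flip: smult_smult)
  then show False using \<open>c \<noteq> d\<close> assms by simp
qed

lemma lsubspace_carr: "lsubspace L carr"
  unfolding lsubspace_def by simp

lemma lsubspace_zero_singleton: "lsubspace L {\<zero>}"
  unfolding lsubspace_def by simp

lemma lsubspaceD:
  assumes "lsubspace L V"
  shows "V \<subseteq> carr" "\<zero> \<in> V" "x \<in> V \<Longrightarrow> y \<in> V \<Longrightarrow> x \<oplus> y \<in> V" "x \<in> V \<Longrightarrow> c \<cdot> x \<in> V"
  using assms unfolding lsubspace_def by blast+

lemma lsubspace_kernel: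
  assumes "\<And>x y. x \<in> carr \<Longrightarrow> y \<in> carr \<Longrightarrow> f (x \<oplus> y) = f x + f y"
    and "\<And>c x. x \<in> carr \<Longrightarrow> f (c \<cdot> x) = c * f x"
  shows "lsubspace L {v \<in> carr. f v = 0}"
proof -
  have "f \<zero> = 0" using assms(2)[of \<zero> 0] by simp
  then show ?thesis unfolding lsubspace_def using assms by auto
qed

lemma lsubspace_Inter:
  assumes "\<V> \<noteq> {}" "\<And>V. V \<in> \<V> \<Longrightarrow> lsubspace L V"
  shows "lsubspace L (\<Inter>\<V>)"
  unfolding lsubspace_def
proof (intro conjI ballI allI)
  show "\<Inter>\<V> \<subseteq> carr" using assms lsubspaceD(1) by blast
  show "\<zero> \<in> \<Inter>\<V>" using assms(2) lsubspaceD(2) by blast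
  show "x \<oplus> y \<in> \<Inter>\<V>" if "x \<in> \<Inter>\<V>" "y \<in> \<Inter>\<V>" for x y
    using that assms(2) lsubspaceD(3) by blast
  show "c \<cdot> x \<in> \<Inter>\<V>" if "x \<in> \<Inter>\<V>" for c x
    using that assms(2) lsubspaceD(4) by blast
qed

lemma lsubspace_lspan: "S \<subseteq> carr \<Longrightarrow> lsubspace L (lspan L S)"
  unfolding lspan_def by (rule lsubspace_Inter) (use lsubspace_carr in auto)

lemma lspan_superset: "S \<subseteq> lspan L S"
  unfolding lspan_def by blast

lemma lspan_least: "lsubspace L V \<Longrightarrow> S \<subseteq> V \<Longrightarrow> lspan L S \<subseteq> V"
  unfolding lspan_def by blast

lemma lspan_subset_carr: "S \<subseteq> carr \<Longrightarrow> lspan L S \<subseteq> carr"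
  using lsubspace_lspan lsubspaceD(1) by blast

lemma lspan_mono: "S \<subseteq> T \<Longrightarrow> T \<subseteq> carr \<Longrightarrow> lspan L S \<subseteq> lspan L T"
  by (meson lspan_least lsubspace_lspan lspan_superset order_trans)

lemma lspan_insert:
  assumes S: "S \<subseteq> carr" and x: "x \<in> carr"
  shows "lspan L (insert x S) \<subseteq> {s \<oplus> c \<cdot> x | s c. s \<in> lspan L S}"
proof (rule lspan_least)
  let ?W = "{s \<oplus> c \<cdot> x | s c. s \<in> lspan L S}"
  note span = lsubspaceD[OF lsubspace_lspan[OF S]]
  show "lsubspace L ?W" unfolding lsubspace_def
  proof (intro conjI ballI allI)
    show "?W \<subseteq> carr" using span(1) x by auto
    show "\<zero> \<in> ?W" using span(2) x by (auto intro!: exI[of _ \<zero>] exI[of _ 0])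
  next
    fix u v assume "u \<in> ?W" "v \<in> ?W"
    then obtain s c s' c' where u: "u = s \<oplus> c \<cdot> x" "s \<in> lspan L S"
      and v: "v = s' \<oplus> c' \<cdot> x" "s' \<in> lspan L S" by blast
    have "u \<oplus> v = (s \<oplus> s') \<oplus> (c + c') \<cdot> x"
      using u v span(1) x by (simp add: smult_add_left add_assoc add_left_commute subset_iff)
    then show "u \<oplus> v \<in> ?W" using span(3) u v by blast
  next
    fix r u assume "u \<in> ?W"
    then obtain s c where u: "u = s \<oplus> c \<cdot> x" "s \<in> lspan L S" by blast
    then have "r \<cdot> u = r \<cdot> s \<oplus> (r * c) \<cdot> x"
      using span(1) x by (auto simp: smult_add_right smult_smult)
    then show "r \<cdot> u \<in> ?W" using span(4) u by blast
  qed
  show "insert x S \<subseteq> ?W"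
  proof
    fix y assume y: "y \<in> insert x S"
    have mem: "s \<oplus> c \<cdot> x \<in> ?W" if "s \<in> lspan L S" for s c
      using that by blast
    show "y \<in> ?W"
    proof (cases "y = x")
      case True
      then show ?thesis using mem[OF span(2), of 1] x by simp
    next
      case False
      then have "y \<in> S" "y \<in> carr" using y S by auto
      then have "y \<oplus> 0 \<cdot> x \<in> ?W" using mem lspan_superset[of S] by blast
      then show ?thesis using \<open>y \<in> carr\<close> x by simp
    qed
  qed
qed

lemma lsubspace_derived: "lsubspace L (derived L)"
  unfolding derived_def by (rule lsubspace_lspan) (auto simp del: carr_br intro: carr_br)

lemma derived_subset_carr: "derived L \<subseteq> carr"
  using lsubspaceD(1)[OF lsubspace_derived] .

lemma br_in_derived: "a \<in> carr \<Longrightarrow> b \<in> carr \<Longrightarrow> \<lbrace>a, b\<rbrace> \<in> derived L"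
  unfolding derived_def by (rule subsetD[OF lspan_superset]) blast

lemma lideal_derived: "lideal L (derived L)"
  unfolding lideal_def using lsubspace_derived derived_subset_carr br_in_derived by (simp add: subset_iff)

lemma derived_least:
  assumes "lsubspace L V" "\<And>a b. a \<in> carr \<Longrightarrow> b \<in> carr \<Longrightarrow> \<lbrace>a, b\<rbrace> \<in> V"
  shows "derived L \<subseteq> V"
  unfolding derived_def by (rule lspan_least) (use assms in blast)+

lemma metabelian_br_derived:
  assumes "metabelian L" "a \<in> derived L" "b \<in> derived L"
  shows "\<lbrace>a, b\<rbrace> = \<zero>"
proof -
  have "\<lbrace>a', \<lbrace>c, d\<rbrace>\<rbrace> = \<zero>" if "a' \<in> derived L" "c \<in> carr" "d \<in> carr" for a' c d
  proof -
    have "lsubspace L {v \<in> carr. \<lbrace>v, \<lbrace>c, d\<rbrace>\<rbrace> = \<zero>}"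
      unfolding lsubspace_def using that by (simp add: br_add_left br_smult_left)
    then have "derived L \<subseteq> {v \<in> carr. \<lbrace>v, \<lbrace>c, d\<rbrace>\<rbrace> = \<zero>}"
      by (rule derived_least) (use assms(1) that in \<open>simp add: metabelian_def\<close>)
    then show ?thesis using that by blast
  qed
  moreover have "a \<in> carr" using assms(2) derived_subset_carr by blast
  moreover have "lsubspace L {v \<in> carr. \<lbrace>a, v\<rbrace> = \<zero>}"
    unfolding lsubspace_def using \<open>a \<in> carr\<close> by (simp add: br_add_right br_smult_right)
  ultimately have "derived L \<subseteq> {v \<in> carr. \<lbrace>a, v\<rbrace> = \<zero>}"
    using assms(2) by (intro derived_least) auto
  then show ?thesis using assms(3) by blast
qed

lemma nilpotent_derived: "metabelian L \<Longrightarrow> nilpotent_set L (derived L)"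
  unfolding nilpotent_set_def
proof (rule exI[of _ 1])
  assume "metabelian L"
  then have "{\<lbrace>a, b\<rbrace> | a b. a \<in> derived L \<and> b \<in> lcs L (derived L) 0} \<subseteq> {\<zero>}"
    using metabelian_br_derived by auto
  then show "lcs L (derived L) 1 \<subseteq> {\<zero>}"
    by (simp add: lspan_least[OF lsubspace_zero_singleton])
qed

lemma nilpotent_ideal_ad_nilpotent:
  assumes "lideal L I" "nilpotent_set L I" "a \<in> I" "z \<in> carr"
  shows "\<exists>n. ((\<lambda>v. \<lbrace>a, v\<rbrace>) ^^ n) \<lbrace>z, a\<rbrace> = \<zero>"
proof -
  have "((\<lambda>v. \<lbrace>a, v\<rbrace>) ^^ n) \<lbrace>z, a\<rbrace> \<in> lcs L I n" for n
  proof (induction n)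
    case 0
    then show ?case using assms unfolding lideal_def by simp
  next
    case (Suc n)
    then show ?case using assms(3) by (auto intro: subsetD[OF lspan_superset])
  qed
  then show ?thesis using assms(2) unfolding nilpotent_set_def by blast
qed

end

definition transport :: "('k, 'b) liealg \<Rightarrow> ('b \<Rightarrow> 'a) \<Rightarrow> ('k, 'a) liealg" where
  "transport M e = \<lparr>lcarrier = e ` lcarrier M, lzero = e (lzero M),
     ladd = \<lambda>x y. e (ladd M (inv e x) (inv e y)), lneg = \<lambda>x. e (lneg M (inv e x)),
     lsmult = \<lambda>c x. e (lsmult M c (inv e x)), lbr = \<lambda>x y. e (lbr M (inv e x) (inv e y))\<rparr>"

lemma lie_algebra_transport:
  assumes "lie_algebra M" "inj e"
  shows "lie_algebra (transport M e)"
proof -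
  interpret M: lie_alg M by (rule lie_alg.intro) fact
  show ?thesis
    unfolding lie_algebra_def transport_def
    by (simp add: inv_f_f[OF assms(2)] M.smult_smult M.smult_add_left M.smult_add_right
        M.br_add_left M.br_add_right M.br_smult_left M.br_smult_right M.jacobi)
      (simp add: M.add_assoc M.add_commute M.add_left_commute)
qed

lemma metabelian_transport:
  assumes "inj e" "metabelian M"
  shows "metabelian (transport M e)"
  using assms unfolding metabelian_def transport_def by (simp add: inv_f_f)

lemma lie_hom_transport:
  assumes "inj e" "lie_hom L (transport M e) \<phi>"
  shows "lie_hom L M (inv e \<circ> \<phi>)"
proof -
  have "\<phi> x \<in> e ` lcarrier M" if "x \<in> lcarrier L" for x
    using assms(2) that unfolding lie_hom_def transport_def by simp
  then have "inv e (\<phi> x) \<in> lcarrier M" if "x \<in> lcarrier L" for x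
    using that assms(1) by (metis imageE inv_f_f)
  then show ?thesis using assms unfolding lie_hom_def transport_def by (simp add: inv_f_f)
qed

section \<open>The two-dimensional non-abelian Lie algebra\<close>

definition aff_lie :: "('k::field, 'k \<times> 'k) liealg" where
  "aff_lie = \<lparr>lcarrier = UNIV, lzero = (0, 0), ladd = \<lambda>p q. (fst p + fst q, snd p + snd q),
     lneg = \<lambda>p. (- fst p, - snd p), lsmult = \<lambda>r p. (r * fst p, r * snd p),
     lbr = \<lambda>p q. (0, fst p * snd q - fst q * snd p)\<rparr>"

lemma lie_algebra_aff_lie: "lie_algebra aff_lie"
  unfolding lie_algebra_def aff_lie_def by (simp add: algebra_simps)

lemma metabelian_aff_lie: "metabelian aff_lie"
  unfolding metabelian_def aff_lie_def by simp

context lie_alg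
begin

lemma lie_hom_aff_lie:
  assumes "lie_hom L aff_lie P" "x \<in> carr" "y \<in> carr"
  shows "P (x \<oplus> y) = (fst (P x) + fst (P y), snd (P x) + snd (P y))"
    and "P (c \<cdot> x) = (c * fst (P x), c * snd (P x))"
    and "P \<lbrace>x, y\<rbrace> = (0, fst (P x) * snd (P y) - fst (P y) * snd (P x))"
  using assms unfolding lie_hom_def aff_lie_def by simp_all

lemma lie_hom_aff_lie_ad_power:
  assumes P: "lie_hom L aff_lie P" and a: "a \<in> carr" and z: "z \<in> carr" "fst (P z) = 0"
  shows "P (((\<lambda>v. \<lbrace>a, v\<rbrace>) ^^ n) z) = (0, fst (P a) ^ n * snd (P z))"
proof (induction n)
  case 0
  then show ?case using z by (simp add: prod_eq_iff)
next
  case (Suc n)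
  have "((\<lambda>v. \<lbrace>a, v\<rbrace>) ^^ n) z \<in> carr" using a z by (induction n) simp_all
  then show ?case using Suc lie_hom_aff_lie(3)[OF P a] by simp
qed

lemma inj_plane:
  assumes u: "u \<in> carr" and w: "w \<in> carr" and uw: "\<lbrace>u, w\<rbrace> \<noteq> \<zero>"
  shows "inj (\<lambda>p. fst p \<cdot> u \<oplus> snd p \<cdot> w)"
proof (rule injI)
  fix p q assume eq: "fst p \<cdot> u \<oplus> snd p \<cdot> w = fst q \<cdot> u \<oplus> snd q \<cdot> w"
  have left: "\<lbrace>c \<cdot> u \<oplus> d \<cdot> w, w\<rbrace> = c \<cdot> \<lbrace>u, w\<rbrace>" for c d
    using u w by (simp add: br_add_left br_smult_left)
  have right: "\<lbrace>u, c \<cdot> u \<oplus> d \<cdot> w\<rbrace> = d \<cdot> \<lbrace>u, w\<rbrace>" for c d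
    using u w by (simp add: br_add_right br_smult_right)
  have "fst p \<cdot> \<lbrace>u, w\<rbrace> = fst q \<cdot> \<lbrace>u, w\<rbrace>"
    using left[of "fst p" "snd p"] left[of "fst q" "snd q"] eq by simp
  moreover have "snd p \<cdot> \<lbrace>u, w\<rbrace> = snd q \<cdot> \<lbrace>u, w\<rbrace>"
    using right[of "fst p" "snd p"] right[of "fst q" "snd q"] eq by simp
  ultimately show "p = q" using smult_right_cancel[OF _ uw] u w by (simp add: prod_eq_iff)
qed

end

section \<open>Free metabelian Lie algebras\<close>

definition lsubalgebra :: "('k, 'a) liealg \<Rightarrow> 'a set \<Rightarrow> bool" where
  "lsubalgebra L S \<longleftrightarrow> lsubspace L S \<and> (\<forall>x\<in>S. \<forall>y\<in>S. lbr L x y \<in> S)"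

lemma (in lie_alg) lie_algebra_restrict:
  assumes "lsubalgebra L S"
  shows "lie_algebra (L\<lparr>lcarrier := S\<rparr>)"
proof -
  have S: "S \<subseteq> carr" "\<zero> \<in> S" "\<And>x y. x \<in> S \<Longrightarrow> y \<in> S \<Longrightarrow> x \<oplus> y \<in> S"
    "\<And>c x. x \<in> S \<Longrightarrow> c \<cdot> x \<in> S" "\<And>x y. x \<in> S \<Longrightarrow> y \<in> S \<Longrightarrow> \<lbrace>x, y\<rbrace> \<in> S"
    using assms unfolding lsubalgebra_def lsubspace_def by blast+
  have "\<ominus> x \<in> S" if "x \<in> S" for x
    using S(1,4) that neg_eq_smult by (metis subsetD)
  then show ?thesis
    unfolding lie_algebra_def using S
    by (simp add: subsetD[OF S(1)] smult_smult smult_add_left smult_add_right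
        br_add_left br_add_right br_smult_left br_smult_right jacobi)
      (simp add: subsetD[OF S(1)] add_assoc add_commute add_left_commute)
qed

locale free_metabelian_lie = lie_alg L for L :: "('k::field, 'a) liealg" +
  fixes X :: "'x set" and iota :: "'x \<Rightarrow> 'a"
  assumes free_metabelian: "free_metabelian L X iota"
begin

lemma metabelian: "metabelian L"
  using free_metabelian unfolding free_metabelian_def by blast

lemma generator_carr: "x \<in> X \<Longrightarrow> iota x \<in> carr"
  using free_metabelian unfolding free_metabelian_def by blast

lemma lift:
  fixes M :: "('k, 'a) liealg"
  assumes "lie_algebra M" "metabelian M" "\<And>x. x \<in> X \<Longrightarrow> g x \<in> lcarrier M"
  shows "\<exists>f. lie_hom L M f \<and> (\<forall>x\<in>X. f (iota x) = g x)"
  using free_metabelian assms unfolding free_metabelian_def by (simp add: Ball_def)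

lemma lift_unique:
  fixes M :: "('k, 'a) liealg"
  assumes "lie_algebra M" "metabelian M" "lie_hom L M f" "lie_hom L M f'"
    and "\<And>x. x \<in> X \<Longrightarrow> f (iota x) = f' (iota x)" and "y \<in> carr"
  shows "f y = f' y"
proof -
  have "\<forall>x\<in>X. f (iota x) \<in> lcarrier M"
    using assms(3) generator_carr unfolding lie_hom_def by blast
  then show ?thesis
    using free_metabelian assms unfolding free_metabelian_def by simp
qed

lemma generated:
  assumes S: "lsubalgebra L S" and X: "iota ` X \<subseteq> S"
  shows "S = carr"
proof -
  let ?M = "L\<lparr>lcarrier := S\<rparr>"
  have S_carr: "S \<subseteq> carr" using S unfolding lsubalgebra_def lsubspace_def by blast
  have "metabelian ?M" using metabelian S_carr unfolding metabelian_def by (simp add: subset_iff)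
  then have "\<exists>f. lie_hom L ?M f \<and> (\<forall>x\<in>X. f (iota x) = iota x)"
    by (intro lift[OF lie_algebra_restrict[OF S]]) (use X in auto)
  then obtain f where f: "lie_hom L ?M f" "\<forall>x\<in>X. f (iota x) = iota x" by blast
  have "lie_hom L L f" using f(1) S_carr unfolding lie_hom_def by auto
  moreover have "lie_hom L L id" unfolding lie_hom_def by simp
  ultimately have "f y = y" if "y \<in> carr" for y
    using lift_unique[OF lie_algebra metabelian _ _ _ that] f(2) by (metis id_apply)
  then have "carr \<subseteq> S" using f(1) unfolding lie_hom_def by auto
  then show ?thesis using S_carr by blast
qed

lemma lspan_generators_add:
  assumes "T \<subseteq> X" "T' \<subseteq> X"
    and "x \<in> lspan L (derived L \<union> iota ` T)" "y \<in> lspan L (derived L \<union> iota ` T')"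
  shows "x \<oplus> y \<in> lspan L (derived L \<union> iota ` (T \<union> T'))"
proof -
  have gens_carr: "derived L \<union> iota ` (T \<union> T') \<subseteq> carr"
    using assms(1,2) derived_subset_carr generator_carr by blast
  have "lspan L (derived L \<union> iota ` T) \<subseteq> lspan L (derived L \<union> iota ` (T \<union> T'))"
    "lspan L (derived L \<union> iota ` T') \<subseteq> lspan L (derived L \<union> iota ` (T \<union> T'))"
    by (intro lspan_mono gens_carr; blast)+
  then show ?thesis
    using lsubspaceD(3)[OF lsubspace_lspan[OF gens_carr]] assms(3,4) by blast
qed

lemma lspan_generators:
  assumes "v \<in> carr"
  shows "\<exists>T. finite T \<and> T \<subseteq> X \<and> v \<in> lspan L (derived L \<union> iota ` T)"
proof -
  have gens_carr: "derived L \<union> iota ` T \<subseteq> carr" if "T \<subseteq> X" for T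
    using that derived_subset_carr generator_carr by blast
  define S where "S = {v. \<exists>T. finite T \<and> T \<subseteq> X \<and> v \<in> lspan L (derived L \<union> iota ` T)}"
  have span_S: "lspan L (derived L \<union> iota ` T) \<subseteq> S" if "finite T" "T \<subseteq> X" for T
    using that unfolding S_def by blast
  have derived_S: "derived L \<subseteq> S"
    using span_S[of "{}"] lspan_superset[of "derived L"] by simp
  have "lsubalgebra L S"
    unfolding lsubalgebra_def lsubspace_def
  proof (intro conjI ballI allI)
    show "S \<subseteq> carr"
      unfolding S_def using lspan_subset_carr[OF gens_carr] by blast
    show "\<zero> \<in> S" using derived_S lsubspaceD(2)[OF lsubspace_derived] by blast
    show "\<lbrace>x, y\<rbrace> \<in> S" if "x \<in> S" "y \<in> S" for x y
      using derived_S br_in_derived that \<open>S \<subseteq> carr\<close> by blast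
  next
    fix x y assume "x \<in> S" "y \<in> S"
    then obtain T T' where "finite T" "T \<subseteq> X" "x \<in> lspan L (derived L \<union> iota ` T)"
      and "finite T'" "T' \<subseteq> X" "y \<in> lspan L (derived L \<union> iota ` T')"
      unfolding S_def by blast
    then show "x \<oplus> y \<in> S" using lspan_generators_add span_S[of "T \<union> T'"] by blast
  next
    fix c x assume "x \<in> S"
    then obtain T where "finite T" "T \<subseteq> X" "x \<in> lspan L (derived L \<union> iota ` T)"
      unfolding S_def by blast
    then show "c \<cdot> x \<in> S"
      using lsubspaceD(4)[OF lsubspace_lspan[OF gens_carr]] span_S by blast
  qed
  moreover have "iota ` X \<subseteq> S"
  proof
    fix v assume "v \<in> iota ` X"
    then obtain x where "x \<in> X" "v = iota x" by blast
    then show "v \<in> S" using span_S[of "{x}"] lspan_superset[of "derived L \<union> iota ` {x}"] by auto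
  qed
  ultimately have "S = carr" by (rule generated)
  then show ?thesis using assms unfolding S_def by blast
qed

lemma coordinates_vanish_imp_derived:
  assumes add: "\<And>j x y. j \<in> X \<Longrightarrow> x \<in> carr \<Longrightarrow> y \<in> carr \<Longrightarrow> \<Lambda> j (x \<oplus> y) = \<Lambda> j x + \<Lambda> j y"
    and smult: "\<And>j c x. j \<in> X \<Longrightarrow> x \<in> carr \<Longrightarrow> \<Lambda> j (c \<cdot> x) = c * \<Lambda> j x"
    and derived: "\<And>j d. j \<in> X \<Longrightarrow> d \<in> derived L \<Longrightarrow> \<Lambda> j d = 0"
    and generator: "\<And>j i. j \<in> X \<Longrightarrow> i \<in> X \<Longrightarrow> \<Lambda> j (iota i) = (if i = j then 1 else 0)"
  shows "finite T \<Longrightarrow> T \<subseteq> X \<Longrightarrow> u \<in> lspan L (derived L \<union> iota ` T) \<Longrightarrow>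
    \<forall>j\<in>T. \<Lambda> j u = 0 \<Longrightarrow> u \<in> derived L"
proof (induction T arbitrary: u rule: finite_induct)
  case empty
  then show ?case using lspan_least[OF lsubspace_derived, of "derived L"] by auto
next
  case (insert t T)
  have gens_carr: "derived L \<union> iota ` T \<subseteq> carr"
    using derived_subset_carr generator_carr insert.prems(1) by blast
  have t: "t \<in> X" "iota t \<in> carr" using insert.prems(1) generator_carr by auto
  have "u \<in> lspan L (insert (iota t) (derived L \<union> iota ` T))" using insert.prems(2) by simp
  then obtain s c where u: "u = s \<oplus> c \<cdot> iota t" and s: "s \<in> lspan L (derived L \<union> iota ` T)"
    using lspan_insert[OF gens_carr t(2)] by blast
  have "lspan L (derived L \<union> iota ` T) \<subseteq> {v \<in> carr. \<Lambda> t v = 0}"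
  proof (rule lspan_least)
    show "lsubspace L {v \<in> carr. \<Lambda> t v = 0}" by (rule lsubspace_kernel) (use add smult t in auto)
    show "derived L \<union> iota ` T \<subseteq> {v \<in> carr. \<Lambda> t v = 0}"
      using gens_carr derived generator t(1) insert.hyps(2) insert.prems(1) by auto
  qed
  then have "s \<in> carr" "\<Lambda> t s = 0" using s by auto
  then have "\<Lambda> t u = c" using u add smult generator t by simp
  then have "u = s" using u insert.prems(3) \<open>s \<in> carr\<close> t by simp
  then show ?case using insert.IH insert.prems s by auto
qed

lemma single_generator_abelian:
  assumes "X = {j}"
  shows "abelian L"
proof -
  have x: "iota j \<in> carr" using assms generator_carr by blast
  let ?S = "range (\<lambda>c. c \<cdot> iota j)"
  have "lsubalgebra L ?S"
    unfolding lsubalgebra_def lsubspace_def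
  proof (intro conjI ballI allI)
    show "?S \<subseteq> carr" using x by auto
    show "\<zero> \<in> ?S" using x by (auto intro: range_eqI[of _ _ 0])
  next
    fix u v assume "u \<in> ?S" "v \<in> ?S"
    then obtain c d where uv: "u = c \<cdot> iota j" "v = d \<cdot> iota j" by blast
    then have "u \<oplus> v = (c + d) \<cdot> iota j" using x by (simp add: smult_add_left)
    then show "u \<oplus> v \<in> ?S" by (rule range_eqI)
    have "\<lbrace>u, v\<rbrace> = 0 \<cdot> iota j" using uv x by (simp add: br_smult_left br_smult_right)
    then show "\<lbrace>u, v\<rbrace> \<in> ?S" by (rule range_eqI)
  next
    fix c u assume "u \<in> ?S"
    then obtain d where "u = d \<cdot> iota j" by blast
    then have "c \<cdot> u = (c * d) \<cdot> iota j" using x by (simp add: smult_smult)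
    then show "c \<cdot> u \<in> ?S" by (rule range_eqI)
  qed
  moreover have "iota ` X \<subseteq> ?S" using assms x by (auto intro: range_eqI[of _ _ 1])
  ultimately have "?S = carr" by (rule generated)
  show ?thesis
    unfolding abelian_def
  proof (intro ballI)
    fix a b assume "a \<in> carr" "b \<in> carr"
    then have "a \<in> ?S" "b \<in> ?S" using \<open>?S = carr\<close> by simp_all
    then obtain c d where "a = c \<cdot> iota j" "b = d \<cdot> iota j" by blast
    then show "\<lbrace>a, b\<rbrace> = \<zero>" using x by (simp add: br_smult_left br_smult_right)
  qed
qed

text \<open>The universal property only provides maps into algebras whose carrier lies in the type of
  \<open>L\<close>. Two elements with non-zero bracket span a plane in \<open>L\<close> onto which \<open>aff_lie\<close> can
  be transported.\<close>

lemma lift_aff_lie: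
  assumes "\<not> abelian L"
  shows "\<exists>P. lie_hom L aff_lie P \<and> (\<forall>x\<in>X. P (iota x) = g x)"
proof -
  obtain u w where uw: "u \<in> carr" "w \<in> carr" "\<lbrace>u, w\<rbrace> \<noteq> \<zero>"
    using assms unfolding abelian_def by blast
  define e where "e = (\<lambda>p :: 'k \<times> 'k. fst p \<cdot> u \<oplus> snd p \<cdot> w)"
  have e: "inj e" unfolding e_def by (rule inj_plane[OF uw])
  have "\<exists>f. lie_hom L (transport aff_lie e) f \<and> (\<forall>x\<in>X. f (iota x) = e (g x))"
    by (rule lift[OF lie_algebra_transport[OF lie_algebra_aff_lie e]
          metabelian_transport[OF e metabelian_aff_lie]])
      (simp add: transport_def aff_lie_def)
  then obtain f where f: "lie_hom L (transport aff_lie e) f" "\<forall>x\<in>X. f (iota x) = e (g x)"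
    by blast
  have "lie_hom L aff_lie (inv e \<circ> f)" by (rule lie_hom_transport[OF e f(1)])
  moreover have "\<forall>x\<in>X. (inv e \<circ> f) (iota x) = g x" using f(2) by (simp add: inv_f_f[OF e])
  ultimately show ?thesis by blast
qed

lemma hom_aff_lie_detects_non_derived:
  assumes nonabelian: "\<not> abelian L" and a: "a \<in> carr" "a \<notin> derived L"
  obtains j P where "j \<in> X" "lie_hom L aff_lie P"
    "\<forall>i\<in>X. P (iota i) = (if i = j then (1, 0) else (0, 1))" "fst (P a) \<noteq> 0"
proof -
  have "\<exists>Q. lie_hom L aff_lie Q \<and> (\<forall>i\<in>X. Q (iota i) = (if i = j then (1, 0) else (0, 1)))" for j
    by (rule lift_aff_lie[OF nonabelian])
  then obtain P where P: "\<And>j. lie_hom L aff_lie (P j)"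
    and P_gen: "\<And>j i. i \<in> X \<Longrightarrow> P j (iota i) = (if i = j then (1, 0) else (0, 1))"
    by metis
  note P_ops = lie_hom_aff_lie[OF P]
  have "derived L \<subseteq> {v \<in> carr. fst (P j v) = 0}" for j
    by (intro derived_least lsubspace_kernel) (simp_all add: P_ops)
  then have vanish: "d \<in> derived L \<Longrightarrow> fst (P j d) = 0" for j d by blast
  have "fst (P j (iota i)) = (if i = j then 1 else 0)" if "i \<in> X" for i j
    using P_gen[OF that] by simp
  moreover obtain T where T: "finite T" "T \<subseteq> X" "a \<in> lspan L (derived L \<union> iota ` T)"
    using lspan_generators[OF a(1)] by blast
  ultimately obtain j where j: "j \<in> T" "fst (P j a) \<noteq> 0"
    using coordinates_vanish_imp_derived[of "\<lambda>j v. fst (P j v)", OF _ _ vanish _ T] a(2)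
    by (auto simp: P_ops)
  show thesis
    by (rule that[of j "P j"]) (use j T(2) P P_gen in auto)
qed

lemma nilpotent_ideal_subset_derived:
  assumes nonabelian: "\<not> abelian L" and I: "lideal L I" "nilpotent_set L I"
  shows "I \<subseteq> derived L"
proof
  fix a assume "a \<in> I"
  then have a: "a \<in> carr" using I(1) unfolding lideal_def lsubspace_def by blast
  show "a \<in> derived L"
  proof (rule ccontr)
    assume "a \<notin> derived L"
    then obtain j P where j: "j \<in> X" and P: "lie_hom L aff_lie P"
      and P_gen: "\<forall>i\<in>X. P (iota i) = (if i = j then (1, 0) else (0, 1))" and Pa: "fst (P a) \<noteq> 0"
      by (rule hom_aff_lie_detects_non_derived[OF nonabelian a])
    obtain y where y: "y \<in> X" "y \<noteq> j"
      using single_generator_abelian nonabelian j by blast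
    let ?z = "\<lbrace>iota y, a\<rbrace>"
    have z: "?z \<in> carr" "P ?z = (0, - fst (P a))"
      using lie_hom_aff_lie(3)[OF P generator_carr[OF y(1)] a] P_gen y a generator_carr[OF y(1)]
      by simp_all
    obtain n where n: "((\<lambda>v. \<lbrace>a, v\<rbrace>) ^^ n) ?z = \<zero>"
      using nilpotent_ideal_ad_nilpotent[OF I \<open>a \<in> I\<close> generator_carr[OF y(1)]] by blast
    have "P (((\<lambda>v. \<lbrace>a, v\<rbrace>) ^^ n) ?z) = (0, fst (P a) ^ n * - fst (P a))"
      using lie_hom_aff_lie_ad_power[OF P a z(1)] z(2) by simp
    then have "P \<zero> = (0, - (fst (P a) ^ Suc n))" by (simp add: n)
    moreover have "P \<zero> = (0, 0)" using lie_hom_aff_lie(2)[OF P carr_zero carr_zero, where c = 0] by simp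
    ultimately show False using Pa by simp
  qed
qed

end

theorem proposition2p3p2:
  fixes F :: "('k::field, 'a) liealg" and X :: "'x set" and iota :: "'x \<Rightarrow> 'a"
  assumes "free_metabelian F X iota"
    and "\<not> abelian F"
  shows "fitting F = derived F"
proof -
  interpret free_metabelian_lie F X iota
    using assms(1) by unfold_locales (simp_all add: free_metabelian_def)
  have "\<Union>{I. lideal F I \<and> nilpotent_set F I} = derived F"
    using nilpotent_ideal_subset_derived[OF assms(2)] lideal_derived nilpotent_derived[OF metabelian]
    by blast
  then show ?thesis
    unfolding fitting_def ideal_gen_def using lideal_derived by blast
qed

end
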